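(* Let $G$ be a group with identity $e$, $A=\{0,1\}$, $S\subseteq G$ finite with $e\in S$, and suppose $(\mathcal P,f)$ generates a local map $\mu:A^S\to A$. Then $e$ is essential for $\mu$ if and only if there exist $z,w$ with $z\neq w$, $\mathrm{Res}_e(z)=\mathrm{Res}_e(w)$, and either $z,w\in\mathcal P^c$ or $z,w\in\mathcal P$.
   Context: $A^S$ is the set of functions $S\to A$. For $s\in S$, $\mathrm{Res}_s(z)=z|_{S\setminus\{s\}}$. An element $s\in S$ is essential for $\mu$ if there exist $z,w\in A^S$ with $\mathrm{Res}_s(z)=\mathrm{Res}_s(w)$ but $\mu(z)\neq\mu(w)$. The pair $(\mathcal P,f)$ generates $\mu$ if $\mathcal P=\{z\in A^S:\mu(z)\neq z(e)\}$ and $f:\mathcal P\to A$ is the restriction of $\mu$ to $\mathcal P$; $\mathcal P^c=A^S\setminus\mathcal P$. *)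

theory Defs
  imports "HOL-Algebra.Group" "HOL-Library.FuncSet"
begin

definition alph :: "nat set" where "alph = {0, 1}"

definition configs :: "'g set \<Rightarrow> ('g \<Rightarrow> nat) set" where
  "configs S = (S \<rightarrow>\<^sub>E alph)"

definition Res :: "'g set \<Rightarrow> 'g \<Rightarrow> ('g \<Rightarrow> nat) \<Rightarrow> ('g \<Rightarrow> nat)" where
  "Res S s z = restrict z (S - {s})"

definition essential :: "'g set \<Rightarrow> (('g \<Rightarrow> nat) \<Rightarrow> nat) \<Rightarrow> 'g \<Rightarrow> bool" where
  "essential S \<mu> s \<longleftrightarrow>
     (\<exists>z\<in>configs S. \<exists>w\<in>configs S. Res S s z = Res S s w \<and> \<mu> z \<noteq> \<mu> w)"

definition generates ::
  "'g set \<Rightarrow> 'g \<Rightarrow> ('g \<Rightarrow> nat) set \<Rightarrow> (('g \<Rightarrow> nat) \<Rightarrow> nat) \<Rightarrow> (('g \<Rightarrow> nat) \<Rightarrow> nat) \<Rightarrow> bool" where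
  "generates S e P f \<mu> \<longleftrightarrow>
     P = {z \<in> configs S. \<mu> z \<noteq> z e} \<and> f = restrict \<mu> P"

end

theory Submission
  imports Defs
begin

text \<open>Two configurations with the same restriction to \<open>S - {s}\<close> differ exactly when they differ
  at \<open>s\<close>. Over the binary alphabet, \<open>z\<close> lies in \<open>P\<close> iff \<open>\<mu> z = 1 - z e\<close>; so if \<open>z e \<noteq> w e\<close>,
  the values \<open>\<mu> z\<close> and \<open>\<mu> w\<close> differ iff \<open>z\<close> and \<open>w\<close> are on the same side of \<open>P\<close>.\<close>

lemma configs_eq_iff_if_Res_eq:
  assumes "z \<in> configs S" and "w \<in> configs S" and "Res S s z = Res S s w"
  shows "z = w \<longleftrightarrow> z s = w s"
proof
  assume at_s: "z s = w s"
  show "z = w"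
  proof
    fix x
    show "z x = w x"
    proof (cases "x \<in> S - {s}")
      case True
      then show ?thesis using assms(3) unfolding Res_def by (metis restrict_apply')
    next
      case False
      then show ?thesis using at_s assms(1,2) unfolding configs_def
        by (metis DiffI PiE_arb singletonD)
    qed
  qed
qed simp

lemma configs_apply_alph: "z \<in> configs S \<Longrightarrow> x \<in> S \<Longrightarrow> z x \<in> alph"
  unfolding configs_def by auto

lemma generates_mem_iff:
  "generates S e P f \<mu> \<Longrightarrow> z \<in> configs S \<Longrightarrow> z \<in> P \<longleftrightarrow> \<mu> z \<noteq> z e"
  unfolding generates_def by blast

lemma alph_neq_iff:
  assumes "a \<in> alph" "b \<in> alph" "c \<in> alph" "d \<in> alph" and "a \<noteq> b"
  shows "c \<noteq> d \<longleftrightarrow> (c \<noteq> a \<longleftrightarrow> d \<noteq> b)"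
  using assms unfolding alph_def by auto

lemma generates_neq_iff_same_side:
  assumes gen: "generates S e P f \<mu>" and "e \<in> S" and \<mu>: "\<mu> \<in> configs S \<rightarrow> alph"
    and z: "z \<in> configs S" and w: "w \<in> configs S" and Res_eq: "Res S e z = Res S e w"
  shows "\<mu> z \<noteq> \<mu> w \<longleftrightarrow> z \<noteq> w \<and> (z \<in> P \<longleftrightarrow> w \<in> P)"
proof (cases "z = w")
  case False
  then have "z e \<noteq> w e" using configs_eq_iff_if_Res_eq[OF z w Res_eq] by blast
  moreover have "z e \<in> alph" "w e \<in> alph" "\<mu> z \<in> alph" "\<mu> w \<in> alph"
    using configs_apply_alph[OF z \<open>e \<in> S\<close>] configs_apply_alph[OF w \<open>e \<in> S\<close>] \<mu> z w by auto
  ultimately show ?thesis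
    using False alph_neq_iff generates_mem_iff[OF gen z] generates_mem_iff[OF gen w] by metis
qed simp

theorem mainTheorem6:
  fixes G (structure) and S :: "'g set" and \<mu> :: "('g \<Rightarrow> nat) \<Rightarrow> nat"
    and P :: "('g \<Rightarrow> nat) set" and f :: "('g \<Rightarrow> nat) \<Rightarrow> nat"
  assumes "group G"
    and "S \<subseteq> carrier G" and "finite S" and "\<one> \<in> S"
    and "\<mu> \<in> configs S \<rightarrow> alph"
    and "generates S \<one> P f \<mu>"
  shows "essential S \<mu> \<one> \<longleftrightarrow>
    (\<exists>z\<in>configs S. \<exists>w\<in>configs S. z \<noteq> w \<and> Res S \<one> z = Res S \<one> w \<and>
       ((z \<in> configs S - P \<and> w \<in> configs S - P) \<or> (z \<in> P \<and> w \<in> P)))"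
proof -
  have "\<mu> z \<noteq> \<mu> w \<longleftrightarrow> z \<noteq> w \<and>
      ((z \<in> configs S - P \<and> w \<in> configs S - P) \<or> (z \<in> P \<and> w \<in> P))"
    if "z \<in> configs S" "w \<in> configs S" "Res S \<one> z = Res S \<one> w" for z w
    using generates_neq_iff_same_side[OF assms(6,4,5) that] that by blast
  then show ?thesis unfolding essential_def by blast
qed

end
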